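(* Let $P$ and $Q$ be tabloids of the same shape $\lambda$ with $\lambda_i=\lambda_{i+1}$. Then the dominance constant satisfies \[ r_{i+1}(P,Q)=\operatorname{lch}_i(P)-\operatorname{lch}_i(Q).\]
   Context: Fix $n\ge1$; $\overline i=i+n\mathbb Z$, $[\overline n]=\{\overline1,\dots,\overline n\}$. A tabloid of shape $\lambda$ ($\lambda$ a partition) is a sequence of pairwise disjoint subsets $T_1,T_2,\dots,T_{\ell(\lambda)}$ (rows) of $[\overline n]$ with $|T_r|=\lambda_r$. Broken order: $\overline1<\overline2<\dots<\overline n$. Local charge: suppose rows $k$ and $k+1$ of a tabloid $T$ both have size $m$. List the elements of $T_k$ as $\overline{a_1}<\dots<\overline{a_m}$ in broken order. For $t=1,\dots,m$ in turn, match $\overline{a_t}$ with the smallest (in broken order) not yet matched element of $T_{k+1}$ that is larger than $\overline{a_t}$, if one exists, and otherwise with the smallest not yet matched element of $T_{k+1}$. Then $\operatorname{lch}_k(T)$ is the number of $t$ such that $\overline{a_t}$ is larger (in broken order) than the element it is matched with. Streams: cells are pairs $(i,j)\in\mathbb Z^2$ (row $i$, increasing southward; column $j$, increasing eastward); $(i,j)$ is northwest of $(i',j')$ if $i\le i'$, $j\le j'$; north means smaller row index, west smaller column index. For $A,B\subseteq[\overline n]$ with $|A|=|B|=m\ge1$ and $r\in\mathbb Z$, enumerate $\bigcup A=\{\dots<a_0<a_1<a_2<\dots\}\subseteq\mathbb Z$ with $1\le a_1<\dots<a_m\le n$ and $a_{t+m}=a_t+n$, and similarly $\bigcup B=\{b_t\}$;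 define the stream $\Sigma_r(A,B)=\{(b_t,a_{t+r}):t\in\mathbb Z\}$ (rows from $B$, columns from $A$; $r$ is its altitude). A proper numbering of a stream is an indexing of its cells by $\mathbb Z$, $X^{(t)}$, with $X^{(t+1)}$ southeast of $X^{(t)}$ for all $t$. If $S,T$ are streams with the same $m$, no cell of $S$ sharing a row or column with a cell of $T$, and $S$ is properly numbered, the backward numbering of $T$ with respect to $S$ is the unique proper numbering of $T$ such that $S^{(t)}$ is northwest of $T^{(t)}$ for all $t$ and $S^{(j+1)}$ is not northwest of $T^{(j)}$ for some $j$. Then $T$ is concurrent to $S$ if, with this numbering, there exist $t,j$ with $T^{(t)}$ strictly north of $S^{(t+1)}$ and $T^{(j)}$ strictly west of $S^{(j+1)}$. For tabloids $P,Q$ of shape $\lambda$ with $\lambda_i=\lambda_{i+1}$, the dominance constant $r_{i+1}(P,Q)$ is the unique integer $r$ such that $\Sigma_r(P_{i+1},Q_{i+1})$ is concurrent to $\Sigma_0(P_i,Q_i)$ (such $r$ exists and is unique). *)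

theory Defs
  imports Main
begin

text \<open>Residues in [n-bar] are represented by their representatives 1..n (ints);
  the broken order 1 < 2 < ... < n is then the usual order on these representatives.
  Rows and parts are indexed from 1.\<close>

definition is_partition :: "nat list \<Rightarrow> bool" where
  "is_partition lam \<longleftrightarrow> sorted (rev lam) \<and> (\<forall>x\<in>set lam. 0 < x)"

definition part :: "nat list \<Rightarrow> nat \<Rightarrow> nat" where
  "part lam k = lam ! (k - 1)"

definition row :: "int set list \<Rightarrow> nat \<Rightarrow> int set" where
  "row T k = T ! (k - 1)"

definition tabloid :: "int \<Rightarrow> nat list \<Rightarrow> int set list \<Rightarrow> bool" where
  "tabloid n lam T \<longleftrightarrow> length T = length lam
     \<and> (\<forall>k\<in>{1..length lam}. row T k \<subseteq> {1..n} \<and> card (row T k) = part lam k)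
     \<and> (\<forall>k\<in>{1..length lam}. \<forall>l\<in>{1..length lam}. k \<noteq> l \<longrightarrow> row T k \<inter> row T l = {})"

fun lch_aux :: "int list \<Rightarrow> int set \<Rightarrow> nat" where
  "lch_aux [] U = 0"
| "lch_aux (a # as) U =
     (let b = (if {b\<in>U. a < b} \<noteq> {} then Min {b\<in>U. a < b} else Min U)
      in (if b < a then 1 else 0) + lch_aux as (U - {b}))"

definition lch :: "int set list \<Rightarrow> nat \<Rightarrow> nat" where
  "lch T k = lch_aux (sorted_list_of_set (row T k)) (row T (k + 1))"

text \<open>Enumeration of the union of residue classes: a_1 < ... < a_m are the elements
  of A in 1..n, and a_(t+m) = a_t + n.\<close>

definition enum :: "int \<Rightarrow> int set \<Rightarrow> int \<Rightarrow> int" where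
  "enum n A t = (let s = sorted_list_of_set A; m = int (card A)
                 in s ! nat ((t - 1) mod m) + n * ((t - 1) div m))"

text \<open>Stream Sigma_r(A,B) = {(b_t, a_(t+r))}: rows from B, columns from A.\<close>

definition stream :: "int \<Rightarrow> int \<Rightarrow> int set \<Rightarrow> int set \<Rightarrow> (int \<times> int) set" where
  "stream n r A B = {(enum n B t, enum n A (t + r)) | t. True}"

definition canon_numbering :: "int \<Rightarrow> int \<Rightarrow> int set \<Rightarrow> int set \<Rightarrow> int \<Rightarrow> int \<times> int" where
  "canon_numbering n r A B t = (enum n B t, enum n A (t + r))"

definition nw :: "int \<times> int \<Rightarrow> int \<times> int \<Rightarrow> bool" where
  "nw c d \<longleftrightarrow> fst c \<le> fst d \<and> snd c \<le> snd d"

definition proper_numbering :: "(int \<times> int) set \<Rightarrow> (int \<Rightarrow> int \<times> int) \<Rightarrow> bool" where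
  "proper_numbering S X \<longleftrightarrow> bij_betw X UNIV S \<and> (\<forall>t. nw (X t) (X (t + 1)))"

definition backward_numbering ::
  "(int \<times> int) set \<Rightarrow> (int \<Rightarrow> int \<times> int) \<Rightarrow> int \<Rightarrow> int \<times> int" where
  "backward_numbering T XS = (THE Y. proper_numbering T Y \<and> (\<forall>t. nw (XS t) (Y t))
                                  \<and> (\<exists>j. \<not> nw (XS (j + 1)) (Y j)))"

definition concurrent :: "(int \<times> int) set \<Rightarrow> (int \<times> int) set \<Rightarrow> (int \<Rightarrow> int \<times> int) \<Rightarrow> bool" where
  "concurrent T S XS \<longleftrightarrow>
     proper_numbering S XS
     \<and> (\<forall>c\<in>S. \<forall>d\<in>T. fst c \<noteq> fst d \<and> snd c \<noteq> snd d)
     \<and> (let Y = backward_numbering T XS in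
          (\<exists>t j. fst (Y t) < fst (XS (t + 1)) \<and> snd (Y j) < snd (XS (j + 1))))"

text \<open>Dominance constant r_(i+1)(P,Q); Sigma_0(P_i,Q_i) carries its natural numbering
  t \<mapsto> (b_t, a_t).\<close>

definition dom_const :: "int \<Rightarrow> int set list \<Rightarrow> int set list \<Rightarrow> nat \<Rightarrow> int" where
  "dom_const n P Q i = (THE r. concurrent (stream n r (row P (i + 1)) (row Q (i + 1)))
                                         (stream n 0 (row P i) (row Q i))
                                         (canon_numbering n 0 (row P i) (row Q i)))"

end

theory Submission
  imports Defs
begin

text \<open>Let \<open>c(X, X')\<close> be the local charge of a row \<open>X\<close> into the next row \<open>X'\<close>, and \<open>x(t)\<close>, \<open>x'(t)\<close>
  the periodic enumerations of \<open>X\<close>, \<open>X'\<close>. Counting, for each \<open>a \<in> X\<close>, how many elements of \<open>X\<close> at or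
  above \<open>a\<close> compete for the partners in \<open>X'\<close> above \<open>a\<close> shows that the greedy matching wraps around
  as often as the largest of \<open>0\<close> and the numbers \<open>surplus X X' a\<close>, and that this number is also the least shift \<open>u\<close> with
  \<open>x(t) \<le> x'(t + u)\<close> for all \<open>t\<close>.

  Proper numberings of a stream are the translates of its canonical numbering. So the backward
  numbering of the stream of \<open>P(i+1), Q(i+1)\<close> with respect to that of \<open>P(i), Q(i)\<close> is the canonical
  one translated by \<open>s = max(c\<^sub>Q, c\<^sub>P - r)\<close>, where \<open>c\<^sub>P = c(P(i), P(i+1))\<close> and
  \<open>c\<^sub>Q = c(Q(i), Q(i+1))\<close>; the two concurrency conditions then read \<open>s \<le> c\<^sub>Q\<close> and \<open>s + r \<le> c\<^sub>P\<close>,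
  that is, \<open>r = c\<^sub>P - c\<^sub>Q\<close>.\<close>

section \<open>Greedy matching\<close>

definition surplus :: "int set \<Rightarrow> int set \<Rightarrow> int \<Rightarrow> int" where
  "surplus X U a = int (card {x\<in>X. a \<le> x}) - int (card {y\<in>U. a < y})"

lemma lch_aux_Cons_successor:
  assumes "finite U" "b \<in> U" "a < b" "\<And>y. y \<in> U \<Longrightarrow> a < y \<Longrightarrow> b \<le> y"
  shows "lch_aux (a # as) U = lch_aux as (U - {b})"
proof -
  have "Min {y\<in>U. a < y} = b"
    using assms by (intro Min_eqI) auto
  then show ?thesis
    using assms by (auto simp: Let_def)
qed

lemma lch_aux_Cons_wrap:
  assumes "finite U" "U \<noteq> {}" "\<forall>y\<in>U. y < a"
  shows "lch_aux (a # as) U = 1 + lch_aux as (U - {Min U})"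
proof -
  have "{y\<in>U. a < y} = {}" "Min U < a"
    using assms by auto
  then show ?thesis
    by (simp add: Let_def)
qed

lemma card_ge_hd_sorted:
  fixes a :: "'a :: linorder"
  assumes "sorted_wrt (<) (a # as)"
  shows "card {x\<in>set (a # as). a \<le> x} = length (a # as)"
proof -
  have "{x\<in>set (a # as). a \<le> x} = set (a # as)"
    using assms by (auto intro: less_imp_le)
  moreover have "distinct (a # as)"
    using assms strict_sorted_iff by blast
  ultimately show ?thesis
    by (simp add: distinct_card)
qed

lemma card_filter_set_le_length: "card {x\<in>set xs. P x} \<le> length xs"
proof -
  have "card {x\<in>set xs. P x} \<le> card (set xs)"
    by (rule card_mono) auto
  then show ?thesis
    using card_length le_trans by blast
qed

lemma surplus_le_iff_length_le:
  assumes sorted: "sorted_wrt (<) xs" and "xs \<noteq> []" and below: "\<forall>y\<in>U. \<forall>x\<in>set xs. y < x"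
  shows "(\<forall>x\<in>set xs. surplus (set xs) U x \<le> u) \<longleftrightarrow> int (length xs) \<le> u"
proof -
  obtain a as where xs: "xs = a # as"
    using \<open>xs \<noteq> []\<close> by (cases xs) auto
  have surplus_eq: "surplus (set xs) U x = int (card {y\<in>set xs. x \<le> y})" if "x \<in> set xs" for x
  proof -
    have "{y\<in>U. x < y} = {}"
      using below that by fastforce
    then show ?thesis
      unfolding surplus_def by (metis card.empty of_nat_0 diff_zero)
  qed
  have "surplus (set xs) U a = int (length xs)"
    using surplus_eq[of a] card_ge_hd_sorted[of a as] sorted unfolding xs by simp
  moreover have "surplus (set xs) U x \<le> int (length xs)" if "x \<in> set xs" for x
    using surplus_eq[OF that] card_filter_set_le_length[of xs] by simp
  ultimately show ?thesis
    using xs by (metis list.set_intros(1) order_trans)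
qed

lemma surplus_Cons:
  assumes "sorted_wrt (<) (a # as)" "x \<in> set as"
  shows "surplus (set (a # as)) U x = surplus (set as) U x"
proof -
  have "{y\<in>set (a # as). x \<le> y} = {y\<in>set as. x \<le> y}"
    using assms by auto
  then show ?thesis
    unfolding surplus_def by simp
qed

lemma surplus_Diff_singleton:
  assumes "finite U" "b \<in> U" "x \<noteq> b"
  shows "surplus X (U - {b}) x = surplus X U x + (if x < b then 1 else 0)"
proof -
  have "{y\<in>U - {b}. x < y} = {y\<in>U. x < y} - {b}"
    by auto
  moreover have "x < b \<Longrightarrow> 0 < card {y\<in>U. x < y}"
    using assms(1,2) card_gt_0_iff by fastforce
  ultimately have "card {y\<in>U - {b}. x < y} + (if x < b then 1 else 0) = card {y\<in>U. x < y}"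
    using assms(1,2) by (simp add: card_Diff_singleton_if)
  then show ?thesis
    unfolding surplus_def by (cases "x < b") simp_all
qed

context
  fixes a b :: int and as :: "int list" and U :: "int set"
  assumes sorted: "sorted_wrt (<) (a # as)" and fin: "finite U"
    and disj: "set (a # as) \<inter> U = {}"
    and successor: "b \<in> U" "a < b" "\<And>y. y \<in> U \<Longrightarrow> a < y \<Longrightarrow> b \<le> y"
begin

lemma surplus_Diff_successor:
  assumes "x \<in> set as"
  shows "surplus (set as) (U - {b}) x = surplus (set (a # as)) U x + (if x < b then 1 else 0)"
proof -
  have "x \<noteq> b"
    using disj successor(1) assms by auto
  then show ?thesis
    using surplus_Diff_singleton[OF fin successor(1), of x "set as"] surplus_Cons[OF sorted assms]
    by simp
qed

lemma card_above_below_successor: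
  assumes "x \<in> set as" "x < b"
  shows "card {y\<in>U. x < y} = card {y\<in>U. a < y}"
proof -
  have "a < x"
    using sorted assms(1) by simp
  then have "{y\<in>U. x < y} = {y\<in>U. a < y}"
    using successor assms(2) by fastforce
  then show ?thesis
    by simp
qed

lemma surplus_hd_eq: "surplus (set (a # as)) U a = int (length as) + 1 - int (card {y\<in>U. a < y})"
  using card_ge_hd_sorted[OF sorted] unfolding surplus_def by simp

lemma surplus_Cons_le_if_surplus_Diff_le:
  assumes "0 \<le> u" and new_le: "\<forall>x\<in>set as. surplus (set as) (U - {b}) x \<le> u"
  shows "\<forall>x\<in>set (a # as). surplus (set (a # as)) U x \<le> u"
proof -
  let ?above = "\<lambda>x. card {y\<in>U. x < y}"
  have "surplus (set (a # as)) U a \<le> u"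
  proof (cases as)
    case Nil
    have "1 \<le> ?above a"
      using fin successor(1,2) by (auto simp: Suc_le_eq card_gt_0_iff)
    then show ?thesis
      using surplus_hd_eq Nil \<open>0 \<le> u\<close> by simp
  next
    case (Cons a1 as1)
    \<comment> \<open>the surplus at \<open>a\<close> is bounded by the new surplus at the next element \<open>a1\<close>\<close>
    have a1: "a1 \<in> set as"
      using Cons by simp
    have "card {y\<in>set as. a1 \<le> y} = length as"
      using card_ge_hd_sorted[of a1 as1] sorted Cons by simp
    moreover have "?above a1 + (if a1 < b then 0 else 1) \<le> ?above a"
    proof (cases "a1 < b")
      case False
      then have "insert b {y\<in>U. a1 < y} \<subseteq> {y\<in>U. a < y}" "b \<notin> {y\<in>U. a1 < y}"
        using successor sorted a1 by auto
      then show ?thesis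
        using False fin card_mono[of "{y\<in>U. a < y}" "insert b {y\<in>U. a1 < y}"] by simp
    qed (use card_above_below_successor[OF a1] in simp)
    ultimately show ?thesis
      using new_le a1 surplus_Diff_successor[OF a1] surplus_Cons[OF sorted a1] surplus_hd_eq
      unfolding surplus_def by (force split: if_splits)
  qed
  moreover have "surplus (set (a # as)) U x \<le> u" if "x \<in> set as" for x
    using new_le[rule_format, OF that] surplus_Diff_successor[OF that] by (simp split: if_splits)
  ultimately show ?thesis
    by simp
qed

lemma surplus_Diff_le_if_surplus_Cons_le:
  assumes old_le: "\<forall>x\<in>set (a # as). surplus (set (a # as)) U x \<le> u"
  shows "\<forall>x\<in>set as. surplus (set as) (U - {b}) x \<le> u"
proof
  fix x
  assume x: "x \<in> set as"
  show "surplus (set as) (U - {b}) x \<le> u"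
  proof (cases "x < b")
    case True
    have "surplus (set as) U x = int (card {y\<in>set as. x \<le> y}) - int (card {y\<in>U. a < y})"
      using card_above_below_successor[OF x True] unfolding surplus_def by simp
    then have "surplus (set as) (U - {b}) x \<le> surplus (set (a # as)) U a"
      using surplus_Diff_successor[OF x] surplus_Cons[OF sorted x] surplus_hd_eq
        card_filter_set_le_length[of as] True
      by simp
    then show ?thesis
      using old_le by simp
  next
    case False
    then show ?thesis
      using old_le x surplus_Diff_successor[OF x] by simp
  qed
qed

lemma surplus_Cons_successor:
  assumes "0 \<le> u"
  shows "(\<forall>x\<in>set (a # as). surplus (set (a # as)) U x \<le> u) \<longleftrightarrow>
         (\<forall>x\<in>set as. surplus (set as) (U - {b}) x \<le> u)"
  using surplus_Cons_le_if_surplus_Diff_le[OF assms] surplus_Diff_le_if_surplus_Cons_le by blast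

end

lemma lch_aux_le_iff:
  assumes "sorted_wrt (<) xs" "finite U" "set xs \<inter> U = {}" "length xs \<le> card U"
  shows "int (lch_aux xs U) \<le> u \<longleftrightarrow> 0 \<le> u \<and> (\<forall>x\<in>set xs. surplus (set xs) U x \<le> u)"
  using assms
proof (induction xs arbitrary: U u)
  case Nil
  then show ?case by simp
next
  case (Cons a as)
  have sorted: "sorted_wrt (<) as" and above: "\<forall>x\<in>set as. a < x" and "a \<notin> U"
    using Cons.prems(1,3) by auto
  consider (successor) "{y\<in>U. a < y} \<noteq> {}" | (wrap) "\<forall>y\<in>U. y < a"
    using \<open>a \<notin> U\<close> by (metis (mono_tags, lifting) empty_Collect_eq linorder_neqE)
  then show ?case
  proof cases
    case successor
    define b where "b = Min {y\<in>U. a < y}"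
    have b: "b \<in> U" "a < b" "\<And>y. y \<in> U \<Longrightarrow> a < y \<Longrightarrow> b \<le> y"
      using successor Cons.prems(2) Min_in[of "{y\<in>U. a < y}"] unfolding b_def by auto
    have "int (lch_aux as (U - {b})) \<le> u \<longleftrightarrow>
        0 \<le> u \<and> (\<forall>x\<in>set as. surplus (set as) (U - {b}) x \<le> u)"
      using Cons.prems b(1) by (intro Cons.IH) auto
    then show ?thesis
      using lch_aux_Cons_successor[OF Cons.prems(2) b] surplus_Cons_successor[OF Cons.prems(1-3) b]
      by auto
  next
    case wrap
    have "U \<noteq> {}"
      using Cons.prems(4) by auto
    have IH: "int (lch_aux as (U - {Min U})) \<le> u - 1 \<longleftrightarrow>
        0 \<le> u - 1 \<and> (\<forall>x\<in>set as. surplus (set as) (U - {Min U}) x \<le> u - 1)"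
      using Cons.prems \<open>U \<noteq> {}\<close> by (intro Cons.IH) auto
    have below: "\<forall>y\<in>U. \<forall>x\<in>set (a # as). y < x"
      using wrap above by force
    have "0 \<le> u - 1 \<and> (\<forall>x\<in>set as. surplus (set as) (U - {Min U}) x \<le> u - 1) \<longleftrightarrow>
        int (length as) \<le> u - 1"
    proof (cases "as = []")
      case False
      then show ?thesis
        using surplus_le_iff_length_le[OF sorted False, of "U - {Min U}" "u - 1"] below by auto
    qed simp
    moreover have "0 \<le> u \<and> (\<forall>x\<in>set (a # as). surplus (set (a # as)) U x \<le> u) \<longleftrightarrow>
        int (length (a # as)) \<le> u"
      using surplus_le_iff_length_le[OF Cons.prems(1) _ below] by auto
    ultimately show ?thesis
      using IH lch_aux_Cons_wrap[OF Cons.prems(2) \<open>U \<noteq> {}\<close> wrap] by auto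
  qed
qed

section \<open>Periodic enumerations\<close>

lemma enum_add_period:
  assumes "finite X" "X \<noteq> {}"
  shows "enum n X (t + q * int (card X)) = enum n X t + q * n"
proof -
  let ?m = "int (card X)"
  have "0 < ?m"
    using assms by auto
  then have "(t - 1 + q * ?m) mod ?m = (t - 1) mod ?m"
    and "(t - 1 + q * ?m) div ?m = (t - 1) div ?m + q"
    by simp_all
  moreover have "t + q * ?m - 1 = t - 1 + q * ?m"
    by simp
  ultimately show ?thesis
    unfolding enum_def Let_def by (simp only:) (simp add: ring_distribs)
qed

lemma enum_eq_nth:
  assumes "1 \<le> t" "t \<le> int (card X)"
  shows "enum n X t = sorted_list_of_set X ! nat (t - 1)"
proof -
  have "(t - 1) mod int (card X) = t - 1" "(t - 1) div int (card X) = 0"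
    using assms by (simp_all add: mod_pos_pos_trivial div_pos_pos_trivial)
  then show ?thesis
    unfolding enum_def Let_def by simp
qed

lemma int_period_decomp:
  fixes m t :: int
  assumes "0 < m"
  obtains t0 q where "1 \<le> t0" "t0 \<le> m" "t = t0 + q * m"
proof
  show "1 \<le> (t - 1) mod m + 1" "(t - 1) mod m + 1 \<le> m"
    using assms by (simp_all add: int_one_le_iff_zero_less pos_mod_bound[THEN zless_imp_add1_zle])
  show "t = ((t - 1) mod m + 1) + (t - 1) div m * m"
    using div_mult_mod_eq[of "t - 1" m] by linarith
qed

lemma nth_sorted_list_of_set_mem:
  assumes "finite X" "k < card X"
  shows "sorted_list_of_set X ! k \<in> X"
  using assms nth_mem[of k "sorted_list_of_set X"] by simp

lemma enum_eq_translate: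
  assumes "finite X" "X \<noteq> {}"
  obtains x q where "x \<in> X" "enum n X t = x + q * n"
proof
  show "sorted_list_of_set X ! nat ((t - 1) mod int (card X)) \<in> X"
  proof (rule nth_sorted_list_of_set_mem[OF assms(1)])
    have "0 < int (card X)"
      using assms by auto
    then show "nat ((t - 1) mod int (card X)) < card X"
      by (simp add: nat_less_iff)
  qed
  show "enum n X t = sorted_list_of_set X ! nat ((t - 1) mod int (card X)) + (t - 1) div int (card X) * n"
    unfolding enum_def Let_def by (simp add: mult.commute)
qed

lemma strict_mono_int_step:
  fixes f :: "int \<Rightarrow> 'a :: order"
  assumes "\<And>t. f t < f (t + 1)"
  shows "strict_mono f"
proof
  fix s t :: int
  assume "s < t"
  then show "f s < f t"
  proof (induction t rule: int_gr_induct)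
    case base
    show ?case using assms .
  next
    case (step t)
    show ?case
      using step.IH assms[of t] by (rule order.strict_trans)
  qed
qed

lemma strict_mono_enum:
  assumes "X \<subseteq> {1..n}" "X \<noteq> {}"
  shows "strict_mono (enum n X)"
proof (rule strict_mono_int_step)
  fix t
  have fin: "finite X"
    using assms(1) finite_subset by blast
  let ?s = "sorted_list_of_set X" and ?m = "int (card X)"
  have "0 < ?m"
    using fin assms(2) by (simp add: card_gt_0_iff)
  then obtain t0 q where t0: "1 \<le> t0" "t0 \<le> ?m" and t: "t = t0 + q * ?m"
    by (rule int_period_decomp)
  have "enum n X t0 < enum n X (t0 + 1)"
  proof (cases "t0 < ?m")
    case True
    then show ?thesis
      using t0 enum_eq_nth[of t0 X n] enum_eq_nth[of "t0 + 1" X n]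
        sorted_wrt_nth_less[OF strict_sorted_list_of_set[of X], of "nat (t0 - 1)" "nat t0"]
      by simp
  next
    case False
    \<comment> \<open>the last element of \<open>X\<close> is followed by the first one, translated by \<open>n\<close>\<close>
    then have "enum n X (t0 + 1) = enum n X 1 + n"
      using t0 enum_add_period[OF fin assms(2), of n 1 1] by (simp add: add.commute)
    moreover have "?s ! 0 \<in> X" "?s ! nat (t0 - 1) \<in> X"
      using t0 \<open>0 < ?m\<close> fin by (auto intro: nth_sorted_list_of_set_mem)
    then have "1 \<le> ?s ! 0" "?s ! nat (t0 - 1) \<le> n"
      using assms(1) by auto
    ultimately show ?thesis
      using t0 \<open>0 < ?m\<close> enum_eq_nth[of t0 X n] enum_eq_nth[of 1 X n] by simp
  qed
  moreover have "enum n X t = enum n X t0 + q * n"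
    unfolding t by (rule enum_add_period[OF fin assms(2)])
  moreover have "t + 1 = (t0 + 1) + q * ?m"
    using t by simp
  then have "enum n X (t + 1) = enum n X (t0 + 1) + q * n"
    by (simp only: enum_add_period[OF fin assms(2)])
  ultimately show "enum n X t < enum n X (t + 1)"
    by simp
qed

lemma enum_neq_enum:
  assumes "X \<subseteq> {1..n}" "X \<noteq> {}" "Y \<subseteq> {1..n}" "Y \<noteq> {}" "X \<inter> Y = {}"
  shows "enum n X t \<noteq> enum n Y k"
proof
  assume eq: "enum n X t = enum n Y k"
  have "finite X" "finite Y"
    using assms(1,3) finite_subset by auto
  obtain x q where x: "x \<in> X" "enum n X t = x + q * n"
    using enum_eq_translate[OF \<open>finite X\<close> assms(2)] .
  obtain y r where y: "y \<in> Y" "enum n Y k = y + r * n"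
    using enum_eq_translate[OF \<open>finite Y\<close> assms(4)] .
  have "1 \<le> x" "x \<le> n" "1 \<le> y" "y \<le> n"
    using x(1) y(1) assms(1,3) by auto
  then have "x - 1 = (x - 1 + q * n) mod n"
    by simp
  also have "x - 1 + q * n = y - 1 + r * n"
    using eq x y by linarith
  also have "(y - 1 + r * n) mod n = y - 1"
    using \<open>1 \<le> y\<close> \<open>y \<le> n\<close> by simp
  finally have "x = y"
    by simp
  then show False
    using x y assms(5) by auto
qed

lemma card_less_nth_sorted_list_of_set:
  fixes X :: "'a :: linorder set"
  assumes "finite X" "k < card X"
  shows "card {y\<in>X. y < sorted_list_of_set X ! k} = k"
proof -
  let ?s = "sorted_list_of_set X"
  have sorted: "sorted_wrt (<) ?s"
    by (rule strict_sorted_list_of_set)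
  have "{y\<in>X. y < ?s ! k} = set (take k ?s)"
  proof (intro set_eqI iffI)
    fix y
    assume y: "y \<in> {y\<in>X. y < ?s ! k}"
    then have "y \<in> set ?s"
      using assms(1) by simp
    then obtain j where j: "j < length ?s" "y = ?s ! j" "?s ! j < ?s ! k"
      using y by (metis in_set_conv_nth mem_Collect_eq)
    have "j < k"
      using sorted_wrt_nth_less[OF sorted, of k j] j assms(2) by (cases "k = j") force+
    then show "y \<in> set (take k ?s)"
      using j by (auto simp: in_set_conv_nth)
  next
    fix y
    assume "y \<in> set (take k ?s)"
    then obtain j where j: "j < k" "y = ?s ! j"
      using assms by (auto simp: in_set_conv_nth)
    then show "y \<in> {y\<in>X. y < ?s ! k}"
      using sorted_wrt_nth_less[OF sorted, of j k] assms nth_sorted_list_of_set_mem[of X j] by simp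
  qed
  then show ?thesis
    using assms(2) by (simp add: distinct_card)
qed

lemma enum_card_less_less:
  assumes X: "X \<subseteq> {1..n}" "X \<noteq> {}" and x: "x \<in> {1..n}"
  shows "enum n X (int (card {y\<in>X. y < x})) < x"
proof -
  define N where "N = card {y\<in>X. y < x}"
  have fin: "finite X"
    using X(1) finite_subset by blast
  let ?s = "sorted_list_of_set X" and ?m = "card X"
  have m: "0 < ?m"
    using fin X(2) by (simp add: card_gt_0_iff)
  have "N \<le> ?m"
    unfolding N_def using fin by (simp add: card_mono)
  show ?thesis
    unfolding N_def[symmetric]
  proof (cases "N = 0")
    case True
    \<comment> \<open>\<open>enum n X 0\<close> is the largest element of \<open>X\<close>, translated by \<open>-n\<close>\<close>
    have "enum n X 0 = enum n X (int ?m) - n"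
      using enum_add_period[OF fin X(2), of n 0 1] by simp
    moreover have "nat (int ?m - 1) = ?m - 1"
      by simp
    then have "enum n X (int ?m) = ?s ! (?m - 1)"
      using enum_eq_nth[of "int ?m" X n] m by simp
    moreover have "?s ! (?m - 1) \<in> X"
      using fin m by (intro nth_sorted_list_of_set_mem) auto
    ultimately show "enum n X (int N) < x"
      using True x X(1) by auto
  next
    case False
    then have e: "enum n X (int N) = ?s ! (N - 1)" and k: "N - 1 < ?m"
      using \<open>N \<le> ?m\<close> enum_eq_nth[of "int N" X n] by (auto simp: nat_diff_distrib)
    have "\<not> x \<le> ?s ! (N - 1)"
    proof
      assume "x \<le> ?s ! (N - 1)"
      then have "N \<le> card {y\<in>X. y < ?s ! (N - 1)}"
        unfolding N_def using fin by (intro card_mono) auto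
      then show False
        using False card_less_nth_sorted_list_of_set[OF fin k] by simp
    qed
    then show "enum n X (int N) < x"
      using e by simp
  qed
qed

lemma less_enum_card_less_plus_one:
  assumes X: "X \<subseteq> {1..n}" "X \<noteq> {}" and x: "x \<in> {1..n}" "x \<notin> X"
  shows "x < enum n X (int (card {y\<in>X. y < x}) + 1)"
proof -
  define N where "N = card {y\<in>X. y < x}"
  have fin: "finite X"
    using X(1) finite_subset by blast
  let ?s = "sorted_list_of_set X" and ?m = "card X"
  have "N \<le> ?m"
    unfolding N_def using fin by (simp add: card_mono)
  show ?thesis
    unfolding N_def[symmetric]
  proof (cases "N < ?m")
    case True
    then have e: "enum n X (int N + 1) = ?s ! N"
      using enum_eq_nth[of "int N + 1" X n] by simp
    have mem: "?s ! N \<in> X"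
      using nth_sorted_list_of_set_mem[OF fin True] .
    have "\<not> ?s ! N < x"
    proof
      assume "?s ! N < x"
      then have "card (insert (?s ! N) {y\<in>X. y < ?s ! N}) \<le> card {y\<in>X. y < x}"
        using fin mem by (intro card_mono) auto
      then show False
        using card_less_nth_sorted_list_of_set[OF fin True] fin N_def by simp
    qed
    moreover have "?s ! N \<noteq> x"
      using mem x(2) by blast
    ultimately show "x < enum n X (int N + 1)"
      using e by simp
  next
    case False
    \<comment> \<open>all of \<open>X\<close> lies below \<open>x\<close>, so the next term is the smallest element plus \<open>n\<close>\<close>
    then have "enum n X (int N + 1) = enum n X 1 + n"
      using \<open>N \<le> ?m\<close> enum_add_period[OF fin X(2), of n 1 1] by (simp add: add.commute)
    moreover have "enum n X 1 = ?s ! 0" "?s ! 0 \<in> X"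
      using enum_eq_nth[of 1 X n] X(2) fin nth_sorted_list_of_set_mem[OF fin, of 0]
      by (simp_all add: Suc_le_eq card_gt_0_iff)
    ultimately show "x < enum n X (int N + 1)"
      using x(1) X(1) by auto
  qed
qed

lemma less_enum_iff:
  assumes X: "X \<subseteq> {1..n}" "X \<noteq> {}" and x: "x \<in> {1..n}" "x \<notin> X"
  shows "x < enum n X k \<longleftrightarrow> int (card {y\<in>X. y < x}) < k"
proof -
  let ?N = "int (card {y\<in>X. y < x})"
  have mono: "strict_mono (enum n X)"
    using strict_mono_enum[OF X] .
  show ?thesis
  proof
    assume "x < enum n X k"
    then have "enum n X ?N < enum n X k"
      using enum_card_less_less[OF X x(1)] by simp
    then show "?N < k"
      using mono by (simp add: strict_mono_less)
  next
    assume "?N < k"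
    then have "enum n X (?N + 1) \<le> enum n X k"
      using mono by (simp add: strict_mono_less_eq)
    then show "x < enum n X k"
      using less_enum_card_less_plus_one[OF assms] by simp
  qed
qed

section \<open>Shifted enumerations and the local charge\<close>

definition row_pair :: "int \<Rightarrow> int set \<Rightarrow> int set \<Rightarrow> bool" where
  "row_pair n X X' \<longleftrightarrow>
     X \<subseteq> {1..n} \<and> X' \<subseteq> {1..n} \<and> X \<noteq> {} \<and> X \<inter> X' = {} \<and> card X' = card X"

lemma row_pairD:
  assumes "row_pair n X X'"
  shows "X \<subseteq> {1..n}" "X' \<subseteq> {1..n}" "finite X" "finite X'" "X \<noteq> {}" "X' \<noteq> {}"
    "X \<inter> X' = {}" "card X' = card X"
proof -
  show X: "X \<subseteq> {1..n}" "X' \<subseteq> {1..n}" "X \<noteq> {}" "X \<inter> X' = {}" "card X' = card X"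
    using assms unfolding row_pair_def by auto
  show "finite X" "finite X'"
    using X(1,2) finite_subset by auto
  then show "X' \<noteq> {}"
    using X(3,5) by auto
qed

definition local_charge :: "int set \<Rightarrow> int set \<Rightarrow> int" where
  "local_charge X X' = int (lch_aux (sorted_list_of_set X) X')"

lemma card_filter_add_card_filter_not:
  assumes "finite Z"
  shows "card {y\<in>Z. P y} + card {y\<in>Z. \<not> P y} = card Z"
proof -
  have "card ({y\<in>Z. P y} \<union> {y\<in>Z. \<not> P y}) = card {y\<in>Z. P y} + card {y\<in>Z. \<not> P y}"
    using assms by (intro card_Un_disjoint) auto
  moreover have "{y\<in>Z. P y} \<union> {y\<in>Z. \<not> P y} = Z"
    by auto
  ultimately show ?thesis
    by simp
qed

lemma surplus_eq_card_less_diff: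
  assumes "finite X" "finite X'" "card X' = card X" "a \<notin> X'"
  shows "surplus X X' a = int (card {y\<in>X'. y < a}) - int (card {y\<in>X. y < a})"
proof -
  have "card {y\<in>X. a \<le> y} + card {y\<in>X. y < a} = card X"
    using card_filter_add_card_filter_not[OF assms(1), of "\<lambda>y. a \<le> y"] by (simp add: not_le)
  moreover have "{y\<in>X'. \<not> a < y} = {y\<in>X'. y < a}"
    using assms(4) by (auto simp: not_less le_less)
  then have "card {y\<in>X'. a < y} + card {y\<in>X'. y < a} = card X'"
    using card_filter_add_card_filter_not[OF assms(2), of "\<lambda>y. a < y"] by simp
  ultimately show ?thesis
    using assms(3) unfolding surplus_def by linarith
qed

lemma enum_less_shift_iff_surplus_le_nth:
  assumes "row_pair n X X'" and t: "1 \<le> t" "t \<le> int (card X)"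
  shows "enum n X t < enum n X' (t + u) \<longleftrightarrow> surplus X X' (sorted_list_of_set X ! nat (t - 1)) \<le> u"
proof -
  note X = row_pairD[OF assms(1)]
  let ?a = "sorted_list_of_set X ! nat (t - 1)"
  have "?a \<in> X"
    using t X(3) by (intro nth_sorted_list_of_set_mem) auto
  then have "?a \<in> {1..n}" "?a \<notin> X'"
    using X(1,7) by auto
  moreover have "card {y\<in>X. y < ?a} = nat (t - 1)"
    using t X(3) by (intro card_less_nth_sorted_list_of_set) auto
  ultimately show ?thesis
    using t enum_eq_nth[OF t, of n] less_enum_iff[OF X(2,6), of ?a "t + u"]
      surplus_eq_card_less_diff[OF X(3,4,8)]
    by auto
qed

lemma enum_less_shift_add_period_iff:
  assumes "row_pair n X X'"
  shows "enum n X (t + q * int (card X)) < enum n X' (t + q * int (card X) + u) \<longleftrightarrow>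
    enum n X t < enum n X' (t + u)"
proof -
  note X = row_pairD[OF assms]
  have "t + q * int (card X) + u = (t + u) + q * int (card X')"
    using X(8) by simp
  then have "enum n X' (t + q * int (card X) + u) = enum n X' (t + u) + q * n"
    by (simp only: enum_add_period[OF X(4,6)])
  then show ?thesis
    using enum_add_period[OF X(3,5), of n t q] by simp
qed

lemma enum_less_shift_iff_surplus_le:
  assumes "row_pair n X X'"
  shows "(\<forall>t. enum n X t < enum n X' (t + u)) \<longleftrightarrow> (\<forall>a\<in>X. surplus X X' a \<le> u)"
proof
  note X = row_pairD[OF assms]
  let ?s = "sorted_list_of_set X"
  assume all: "\<forall>t. enum n X t < enum n X' (t + u)"
  show "\<forall>a\<in>X. surplus X X' a \<le> u"
  proof
    fix a
    assume "a \<in> X"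
    then obtain j where "j < card X" "a = ?s ! j"
      using X(3) by (metis in_set_conv_nth length_sorted_list_of_set set_sorted_list_of_set)
    then show "surplus X X' a \<le> u"
      using enum_less_shift_iff_surplus_le_nth[OF assms, of "int j + 1" u] all by simp
  qed
next
  note X = row_pairD[OF assms]
  let ?s = "sorted_list_of_set X" and ?m = "int (card X)"
  assume all: "\<forall>a\<in>X. surplus X X' a \<le> u"
  show "\<forall>t. enum n X t < enum n X' (t + u)"
  proof
    fix t
    have "0 < ?m"
      using X by (simp add: card_gt_0_iff)
    then obtain t0 q where t0: "1 \<le> t0" "t0 \<le> ?m" and t: "t = t0 + q * ?m"
      by (rule int_period_decomp)
    have "?s ! nat (t0 - 1) \<in> X"
      using t0 X(3) by (intro nth_sorted_list_of_set_mem) auto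
    then show "enum n X t < enum n X' (t + u)"
      using enum_less_shift_iff_surplus_le_nth[OF assms t0, of u] enum_less_shift_add_period_iff[OF assms]
        all t by simp
  qed
qed

lemma enum_le_shift_iff_local_charge_le:
  assumes "row_pair n X X'"
  shows "(\<forall>t. enum n X t \<le> enum n X' (t + u)) \<longleftrightarrow> local_charge X X' \<le> u"
proof -
  note X = row_pairD[OF assms]
  have "(\<forall>t. enum n X t \<le> enum n X' (t + u)) \<longleftrightarrow> (\<forall>t. enum n X t < enum n X' (t + u))"
    using enum_neq_enum[OF X(1,5,2,6,7)] by (auto simp: le_less)
  also have "\<dots> \<longleftrightarrow> (\<forall>a\<in>X. surplus X X' a \<le> u)"
    by (rule enum_less_shift_iff_surplus_le[OF assms])
  also have "\<dots> \<longleftrightarrow> 0 \<le> u \<and> (\<forall>a\<in>X. surplus X X' a \<le> u)"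
  proof -
    have "Min X \<in> X"
      using X(3,5) by simp
    then have "surplus X X' (Min X) = int (card {y\<in>X'. y < Min X}) - int (card {y\<in>X. y < Min X})"
      using X(7) by (intro surplus_eq_card_less_diff[OF X(3,4,8)]) blast
    also have "{y\<in>X. y < Min X} = {}"
      using Min_le[OF X(3)] by force
    finally have "0 \<le> surplus X X' (Min X)"
      by simp
    then show ?thesis
      using \<open>Min X \<in> X\<close> by force
  qed
  also have "\<dots> \<longleftrightarrow> local_charge X X' \<le> u"
    using lch_aux_le_iff[of "sorted_list_of_set X" X' u] X(3,4,7,8)
    unfolding local_charge_def by simp
  finally show ?thesis .
qed

lemma ex_enum_shift_less_iff:
  assumes "row_pair n X X'"
  shows "(\<exists>t. enum n X' (t + s) < enum n X (t + 1)) \<longleftrightarrow> s \<le> local_charge X X'"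
proof -
  have "(\<exists>t. enum n X' (t + s) < enum n X (t + 1)) \<longleftrightarrow>
      \<not> (\<forall>t. enum n X (t + 1) \<le> enum n X' (t + s))"
    by (auto simp: not_le)
  also have "(\<forall>t. enum n X (t + 1) \<le> enum n X' (t + s)) \<longleftrightarrow>
      (\<forall>t. enum n X t \<le> enum n X' (t + (s - 1)))"
  proof
    assume shifted: "\<forall>t. enum n X (t + 1) \<le> enum n X' (t + s)"
    show "\<forall>t. enum n X t \<le> enum n X' (t + (s - 1))"
      using shifted[rule_format, of "t - 1" for t] by (simp add: algebra_simps)
  next
    assume unshifted: "\<forall>t. enum n X t \<le> enum n X' (t + (s - 1))"
    show "\<forall>t. enum n X (t + 1) \<le> enum n X' (t + s)"
      using unshifted[rule_format, of "t + 1" for t] by (simp add: algebra_simps)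
  qed
  also have "\<dots> \<longleftrightarrow> local_charge X X' \<le> s - 1"
    by (rule enum_le_shift_iff_local_charge_le[OF assms])
  finally show ?thesis
    by auto
qed

section \<open>Numberings of streams\<close>

lemma strict_mono_surj_int_eq_shift:
  fixes \<sigma> :: "int \<Rightarrow> int"
  assumes mono: "strict_mono \<sigma>" and "surj \<sigma>"
  shows "\<sigma> t = t + \<sigma> 0"
proof -
  have step: "\<sigma> (k + 1) = \<sigma> k + 1" for k
  proof -
    obtain w where w: "\<sigma> w = \<sigma> k + 1"
      using \<open>surj \<sigma>\<close> by (metis surj_def)
    then have "k < w"
      using mono by (metis less_add_one not_less strict_mono_less_eq)
    then have "\<sigma> (k + 1) \<le> \<sigma> w"
      using mono by (simp add: strict_mono_less_eq)
    moreover have "\<sigma> k < \<sigma> (k + 1)"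
      using mono by (simp add: strict_mono_less)
    ultimately show ?thesis
      using w by simp
  qed
  show ?thesis
  proof (induction t rule: int_induct[where k = 0])
    case (step1 i)
    then show ?case using step[of i] by simp
  next
    case (step2 i)
    then show ?case using step[of "i - 1"] by simp
  qed simp
qed

lemma proper_numbering_range_shift:
  fixes c :: "int \<Rightarrow> int \<times> int"
  assumes "inj c" and steps: "\<And>t. nw (c t) (c (t + 1))"
  shows "proper_numbering (range c) (\<lambda>t. c (t + s))"
proof -
  have "inj (\<lambda>t. c (t + s))"
    using \<open>inj c\<close> unfolding inj_def by (metis add_right_cancel)
  moreover have "range (\<lambda>t. c (t + s)) = range c"
  proof -
    have "c k \<in> range (\<lambda>t. c (t + s))" for k
      using rangeI[of "\<lambda>t. c (t + s)" "k - s"] by simp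
    then show ?thesis
      by auto
  qed
  moreover have "nw (c (t + s)) (c (t + 1 + s))" for t
    using steps[of "t + s"] by (simp add: algebra_simps)
  ultimately show ?thesis
    unfolding proper_numbering_def bij_betw_def by blast
qed

lemma proper_numbering_range_obtain_shift:
  fixes c :: "int \<Rightarrow> int \<times> int"
  assumes mono: "strict_mono (fst \<circ> c)" and "proper_numbering (range c) Y"
  obtains s where "Y = (\<lambda>t. c (t + s))"
proof -
  have "inj c"
    using strict_mono_eq[OF mono] by (intro injI) (metis comp_apply)
  have "inj Y" "range Y = range c" and nw_Y: "\<And>t. nw (Y t) (Y (t + 1))"
    using assms(2) unfolding proper_numbering_def bij_betw_def by auto
  define \<sigma> where "\<sigma> = inv c \<circ> Y"
  have c_\<sigma>: "c (\<sigma> t) = Y t" for t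
    unfolding \<sigma>_def using \<open>range Y = range c\<close> by (metis comp_apply f_inv_into_f rangeI)
  have "strict_mono \<sigma>"
  proof (rule strict_mono_int_step)
    fix t
    have "fst (c (\<sigma> t)) \<le> fst (c (\<sigma> (t + 1)))"
      using nw_Y[of t] unfolding c_\<sigma> nw_def by simp
    then have "\<sigma> t \<le> \<sigma> (t + 1)"
      using mono by (metis comp_apply not_less strict_mono_less)
    moreover have "\<sigma> t \<noteq> \<sigma> (t + 1)"
      using c_\<sigma>[of t] c_\<sigma>[of "t + 1"] \<open>inj Y\<close> by (metis injD add_cancel_left_right one_neq_zero)
    ultimately show "\<sigma> t < \<sigma> (t + 1)"
      by simp
  qed
  moreover have "k \<in> range \<sigma>" for k
  proof -
    obtain w where "c k = Y w"
      using \<open>range Y = range c\<close> by (metis rangeE rangeI)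
    then have "k = \<sigma> w"
      using c_\<sigma>[of w] \<open>inj c\<close> by (metis injD)
    then show ?thesis
      by simp
  qed
  then have "surj \<sigma>"
    by auto
  ultimately have "Y t = c (t + \<sigma> 0)" for t
    using strict_mono_surj_int_eq_shift c_\<sigma> by metis
  then show ?thesis
    using that by blast
qed

lemma proper_numbering_range_iff:
  fixes c :: "int \<Rightarrow> int \<times> int"
  assumes mono: "strict_mono (fst \<circ> c)" and steps: "\<And>t. nw (c t) (c (t + 1))"
  shows "proper_numbering (range c) Y \<longleftrightarrow> (\<exists>s. Y = (\<lambda>t. c (t + s)))"
proof -
  have "inj c"
    using strict_mono_eq[OF mono] by (intro injI) (metis comp_apply)
  then show ?thesis
    using proper_numbering_range_shift[of c, OF _ steps] proper_numbering_range_obtain_shift[OF mono]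
    by blast
qed

lemma stream_eq_range: "stream n r A B = range (canon_numbering n r A B)"
  unfolding stream_def canon_numbering_def by auto

lemma proper_numbering_stream_iff:
  assumes "A \<subseteq> {1..n}" "A \<noteq> {}" "B \<subseteq> {1..n}" "B \<noteq> {}"
  shows "proper_numbering (stream n r A B) Y \<longleftrightarrow> (\<exists>s. Y = (\<lambda>t. canon_numbering n r A B (t + s)))"
  unfolding stream_eq_range
proof (rule proper_numbering_range_iff)
  show "strict_mono (fst \<circ> canon_numbering n r A B)"
    using strict_mono_enum[OF assms(3,4)] unfolding canon_numbering_def by (simp add: comp_def)
  show "nw (canon_numbering n r A B t) (canon_numbering n r A B (t + 1))" for t
    using strict_mono_enum[OF assms(1,2)] strict_mono_enum[OF assms(3,4)]
    unfolding canon_numbering_def nw_def by (simp add: strict_mono_less_eq)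
qed

lemma nw_canon_numbering_shift_iff:
  assumes "row_pair n A A'" "row_pair n B B'"
  shows "(\<forall>t. nw (canon_numbering n 0 A B t) (canon_numbering n r A' B' (t + s))) \<longleftrightarrow>
    local_charge B B' \<le> s \<and> local_charge A A' \<le> s + r"
proof -
  have "(\<forall>t. nw (canon_numbering n 0 A B t) (canon_numbering n r A' B' (t + s))) \<longleftrightarrow>
      (\<forall>t. enum n B t \<le> enum n B' (t + s)) \<and> (\<forall>t. enum n A t \<le> enum n A' (t + (s + r)))"
    unfolding nw_def canon_numbering_def by (auto simp: add.assoc)
  then show ?thesis
    using enum_le_shift_iff_local_charge_le[OF assms(1)] enum_le_shift_iff_local_charge_le[OF assms(2)]
    by simp
qed

lemma ex_not_nw_canon_numbering_shift_iff:
  assumes "row_pair n A A'" "row_pair n B B'"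
  shows "(\<exists>j. \<not> nw (canon_numbering n 0 A B (j + 1)) (canon_numbering n r A' B' (j + s))) \<longleftrightarrow>
    s \<le> local_charge B B' \<or> s + r \<le> local_charge A A'"
proof -
  have "(\<exists>j. \<not> nw (canon_numbering n 0 A B (j + 1)) (canon_numbering n r A' B' (j + s))) \<longleftrightarrow>
      (\<exists>j. enum n B' (j + s) < enum n B (j + 1)) \<or> (\<exists>j. enum n A' (j + (s + r)) < enum n A (j + 1))"
    unfolding nw_def canon_numbering_def by (auto simp: add.assoc not_le)
  then show ?thesis
    using ex_enum_shift_less_iff[OF assms(1)] ex_enum_shift_less_iff[OF assms(2)] by simp
qed

lemma backward_numbering_canon:
  fixes r :: int
  assumes A: "row_pair n A A'" and B: "row_pair n B B'"
  defines "s\<^sub>0 \<equiv> max (local_charge B B') (local_charge A A' - r)"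
  shows "backward_numbering (stream n r A' B') (canon_numbering n 0 A B) =
    (\<lambda>t. canon_numbering n r A' B' (t + s\<^sub>0))"
proof -
  let ?XS = "canon_numbering n 0 A B" and ?c = "canon_numbering n r A' B'"
  let ?backward = "\<lambda>Y. proper_numbering (stream n r A' B') Y \<and> (\<forall>t. nw (?XS t) (Y t))
    \<and> (\<exists>j. \<not> nw (?XS (j + 1)) (Y j))"
  have proper: "proper_numbering (stream n r A' B') Y \<longleftrightarrow> (\<exists>s. Y = (\<lambda>t. ?c (t + s)))" for Y
    using row_pairD[OF A] row_pairD[OF B] by (intro proper_numbering_stream_iff) auto
  have shift: "?backward (\<lambda>t. ?c (t + s)) \<longleftrightarrow> s = s\<^sub>0" for s
    using proper[of "\<lambda>t. ?c (t + s)"] nw_canon_numbering_shift_iff[OF A B, of r s]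
      ex_not_nw_canon_numbering_shift_iff[OF A B, of r s]
    unfolding s\<^sub>0_def by auto
  have "?backward Y \<longleftrightarrow> Y = (\<lambda>t. ?c (t + s\<^sub>0))" for Y
  proof
    assume "?backward Y"
    moreover obtain s where "Y = (\<lambda>t. ?c (t + s))"
      using proper[of Y] \<open>?backward Y\<close> by blast
    ultimately show "Y = (\<lambda>t. ?c (t + s\<^sub>0))"
      using shift[of s] by simp
  qed (use shift[of s\<^sub>0] in simp)
  then show ?thesis
    unfolding backward_numbering_def by simp
qed

lemma concurrent_canon_iff:
  assumes A: "row_pair n A A'" and B: "row_pair n B B'"
  shows "concurrent (stream n r A' B') (stream n 0 A B) (canon_numbering n 0 A B) \<longleftrightarrow>
    r = local_charge A A' - local_charge B B'"
proof -
  note A' = row_pairD[OF A] and B' = row_pairD[OF B]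
  define s\<^sub>0 where "s\<^sub>0 = max (local_charge B B') (local_charge A A' - r)"
  have "proper_numbering (stream n 0 A B) (\<lambda>t. canon_numbering n 0 A B (t + 0))"
    using proper_numbering_stream_iff[OF A'(1,5) B'(1,5)] by blast
  then have "proper_numbering (stream n 0 A B) (canon_numbering n 0 A B)"
    by simp
  moreover have "\<forall>c\<in>stream n 0 A B. \<forall>d\<in>stream n r A' B'. fst c \<noteq> fst d \<and> snd c \<noteq> snd d"
    unfolding stream_def using enum_neq_enum[OF A'(1,5,2,6,7)] enum_neq_enum[OF B'(1,5,2,6,7)] by auto
  moreover have "(\<exists>t. enum n B' (t + s\<^sub>0) < enum n B (t + 1)) \<longleftrightarrow> s\<^sub>0 \<le> local_charge B B'"
    by (rule ex_enum_shift_less_iff[OF B])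
  moreover have "(\<exists>t. enum n A' (t + s\<^sub>0 + r) < enum n A (t + 1)) \<longleftrightarrow> s\<^sub>0 + r \<le> local_charge A A'"
    using ex_enum_shift_less_iff[OF A, of "s\<^sub>0 + r"] by (simp add: add.assoc)
  ultimately show ?thesis
    unfolding concurrent_def backward_numbering_canon[OF A B] Let_def s\<^sub>0_def[symmetric]
    by (simp add: canon_numbering_def s\<^sub>0_def) linarith
qed

section \<open>The dominance constant\<close>

lemma lch_eq_local_charge: "int (lch T k) = local_charge (row T k) (row T (k + 1))"
  unfolding lch_def local_charge_def ..

lemma dom_const_eq_local_charge_diff:
  assumes "row_pair n (row P i) (row P (i + 1))" "row_pair n (row Q i) (row Q (i + 1))"
  shows "dom_const n P Q i =
    local_charge (row P i) (row P (i + 1)) - local_charge (row Q i) (row Q (i + 1))"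
  unfolding dom_const_def concurrent_canon_iff[OF assms] by simp

lemma tabloid_row_pair:
  assumes "is_partition lam" and T: "tabloid n lam T"
    and "1 \<le> i" "i < length lam" "part lam i = part lam (i + 1)"
  shows "row_pair n (row T i) (row T (i + 1))"
proof -
  have i: "i \<in> {1..length lam}" "i + 1 \<in> {1..length lam}"
    using assms by auto
  have "lam ! (i - 1) \<in> set lam"
    using assms by simp
  then have "0 < part lam i"
    using assms(1) unfolding is_partition_def part_def by blast
  moreover have "row T i \<subseteq> {1..n}" "row T (i + 1) \<subseteq> {1..n}"
    "card (row T i) = part lam i" "card (row T (i + 1)) = part lam (i + 1)"
    using T i unfolding tabloid_def by blast+
  moreover have "row T i \<inter> row T (i + 1) = {}"
    using T i unfolding tabloid_def by (metis n_not_Suc_n Suc_eq_plus1)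
  ultimately show ?thesis
    using assms(5) unfolding row_pair_def by auto
qed

theorem theorem5p10:
  fixes n :: int and lam :: "nat list" and P Q :: "int set list" and i :: nat
  assumes "1 \<le> n"
    and "is_partition lam"
    and "tabloid n lam P" and "tabloid n lam Q"
    and "1 \<le> i" and "i < length lam"
    and "part lam i = part lam (i + 1)"
  shows "dom_const n P Q i = int (lch P i) - int (lch Q i)"
  using dom_const_eq_local_charge_diff tabloid_row_pair assms
  unfolding lch_eq_local_charge by blast

end
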